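(* Let $G=(V,E)$ be a finite, connected, undirected graph with $n\ge2$ vertices and let $r>1$. For any $\epsilon\in(0,1)$ and any $t\ge\frac{r}{r-1}n^3\phi(G)/\epsilon$, the Moran process on $G$ with fitness $r$ (started from a single mutant) reaches absorption within $t$ steps with probability at least $1-\epsilon$.
   Context: The Moran process on $G$ with mutant fitness $r>0$ is the Markov chain $(X_i)_{i\ge0}$ whose state $X_i\subseteq V$ is the set of vertices occupied by mutants; every other vertex is occupied by a non-mutant of fitness $1$. Write $W(S)=r|S|+|V\setminus S|$ for the total fitness. Given $X_i=S$, one step is: choose a vertex $x$ with probability $r/W(S)$ if $x\in S$ and $1/W(S)$ if $x\notin S$; then choose a neighbour $y$ of $x$ uniformly at random; set $X_{i+1}=S\cup\{y\}$ if $x\in S$ and $X_{i+1}=S\setminus\{y\}$ if $x\notin S$. The process starts from $X_0=\{x\}$ for a single vertex $x$. Absorption means reaching $X_i=\emptyset$ or $X_i=V$. For $X\subseteq V$, $\phi(X)=\sum_{x\in X}\frac{1}{\deg x}$, and $\phi(G)=\phi(V)$. *)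

theory Defs
  imports "HOL-Probability.Probability_Mass_Function"
begin

definition graph_deg :: "('a \<Rightarrow> 'a \<Rightarrow> bool) \<Rightarrow> 'a set \<Rightarrow> 'a \<Rightarrow> nat" where
  "graph_deg E V x = card {y \<in> V. E x y}"

definition graph_connected :: "('a \<Rightarrow> 'a \<Rightarrow> bool) \<Rightarrow> 'a set \<Rightarrow> bool" where
  "graph_connected E V \<longleftrightarrow> (\<forall>u\<in>V. \<forall>v\<in>V. (\<lambda>a b. a \<in> V \<and> b \<in> V \<and> E a b)\<^sup>*\<^sup>* u v)"

definition phi_set :: "('a \<Rightarrow> 'a \<Rightarrow> bool) \<Rightarrow> 'a set \<Rightarrow> 'a set \<Rightarrow> real" where
  "phi_set E V X = (\<Sum>x\<in>X. 1 / real (graph_deg E V x))"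

definition total_fitness :: "'a set \<Rightarrow> real \<Rightarrow> 'a set \<Rightarrow> real" where
  "total_fitness V r S = r * real (card S) + real (card (V - S))"

definition moran_step :: "('a \<Rightarrow> 'a \<Rightarrow> bool) \<Rightarrow> 'a set \<Rightarrow> real \<Rightarrow> 'a set \<Rightarrow> 'a set pmf" where
  "moran_step E V r S =
     bind_pmf
       (embed_pmf (\<lambda>x. if x \<in> V then (if x \<in> S then r else 1) / total_fitness V r S else 0))
       (\<lambda>x. map_pmf (\<lambda>y. if x \<in> S then insert y S else S - {y}) (pmf_of_set {y \<in> V. E x y}))"

text \<open>Distribution of the trajectory (X_t, ..., X_1, X_0) (most recent state first).\<close>
fun moran_path :: "('a \<Rightarrow> 'a \<Rightarrow> bool) \<Rightarrow> 'a set \<Rightarrow> real \<Rightarrow> 'a set \<Rightarrow> nat \<Rightarrow> 'a set list pmf" where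
  "moran_path E V r S0 0 = return_pmf [S0]"
| "moran_path E V r S0 (Suc t) =
     bind_pmf (moran_path E V r S0 t) (\<lambda>p. map_pmf (\<lambda>S'. S' # p) (moran_step E V r (hd p)))"

end

theory Submission
  imports Defs
begin

(* The potential phi(S) = sum over x in S of 1/deg x ranges over [0, phi(G)].  One step
   of the Moran process from a mutant set S raises its expectation by exactly
   (r - 1) * cut(S) / W(S), where cut(S) sums 1/(deg a * deg b) over the edges ab
   leaving S.  For a proper nonempty S connectivity gives such an edge, so
   cut(S) >= 1/n^2, and W(S) <= r n; hence the drift is at least
   delta = (r - 1) / (r n^3) until absorption. *)

fun chain_path :: "('s \<Rightarrow> 's pmf) \<Rightarrow> 's \<Rightarrow> nat \<Rightarrow> 's list pmf" where
  "chain_path K s0 0 = return_pmf [s0]"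
| "chain_path K s0 (Suc t) =
     bind_pmf (chain_path K s0 t) (\<lambda>p. map_pmf (\<lambda>s. s # p) (K (hd p)))"

text \<open>Candidate trajectories of length t + 1 in a state space; for finite state spaces
  this finite set carries every trajectory distribution, so expectations become finite sums.\<close>
definition paths :: "'s set \<Rightarrow> nat \<Rightarrow> 's list set" where
  "paths \<Omega> t = {p. set p \<subseteq> \<Omega> \<and> length p = Suc t}"

lemma finite_paths: "finite \<Omega> \<Longrightarrow> finite (paths \<Omega> t)"
  unfolding paths_def by (rule finite_lists_length_eq)

lemma hd_paths: "p \<in> paths \<Omega> t \<Longrightarrow> hd p \<in> \<Omega>"
  unfolding paths_def by (cases p) auto

locale additive_drift =
  fixes K :: "'s \<Rightarrow> 's pmf" and \<Omega> :: "'s set" and A :: "'s set"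
    and f :: "'s \<Rightarrow> real" and \<delta> :: real and s0 :: 's
  assumes finite_space: "finite \<Omega>"
    and closed: "\<And>s. s \<in> \<Omega> \<Longrightarrow> set_pmf (K s) \<subseteq> \<Omega>"
    and drift: "\<And>s. s \<in> \<Omega> \<Longrightarrow>
                  f s + (if s \<in> A then 0 else \<delta>) \<le> measure_pmf.expectation (K s) f"
    and delta_pos: "\<delta> > 0"
    and start: "s0 \<in> \<Omega>"
begin

abbreviation path :: "nat \<Rightarrow> 's list pmf" where
  "path t \<equiv> chain_path K s0 t"

definition unabsorbed :: "'s list set" where
  "unabsorbed = {p. set p \<inter> A = {}}"

lemma path_support: "set_pmf (path t) \<subseteq> paths \<Omega> t"
proof (induction t)
  case 0
  show ?case using start by (simp add: paths_def)
next
  case (Suc t)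
  show ?case
  proof
    fix q assume "q \<in> set_pmf (path (Suc t))"
    then obtain p s where "p \<in> paths \<Omega> t" "s \<in> set_pmf (K (hd p))" "q = s # p"
      using Suc by auto
    then show "q \<in> paths \<Omega> (Suc t)"
      using closed[OF hd_paths] by (auto simp: paths_def)
  qed
qed

lemma finite_step_support: "s \<in> \<Omega> \<Longrightarrow> finite (set_pmf (K s))"
  using closed finite_space by (meson finite_subset)

lemma expectation_path:
  "measure_pmf.expectation (path t) g = (\<Sum>p\<in>paths \<Omega> t. pmf (path t) p * g p)"
  using path_support finite_paths[OF finite_space]
  by (subst integral_measure_pmf_real[of "paths \<Omega> t"]) (auto simp: mult.commute)

lemma expectation_path_Suc:
  "measure_pmf.expectation (path (Suc t)) g =
     (\<Sum>p\<in>paths \<Omega> t. pmf (path t) p * measure_pmf.expectation (K (hd p)) (\<lambda>s. g (s # p)))"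
  unfolding chain_path.simps
  using finite_paths[OF finite_space] finite_step_support[OF hd_paths] path_support
  by (subst pmf_expectation_bind[of "paths \<Omega> t"]) auto

abbreviation unabsorbed_prob :: "nat \<Rightarrow> real" where
  "unabsorbed_prob t \<equiv> measure_pmf.expectation (path t) (indicator unabsorbed)"

abbreviation mean_potential :: "nat \<Rightarrow> real" where
  "mean_potential t \<equiv> measure_pmf.expectation (path t) (\<lambda>p. f (hd p))"

text \<open>Once A is visited the trajectory stays absorbed, so the probability of not
  being absorbed is non-increasing in time.\<close>
lemma unabsorbed_prob_Suc: "unabsorbed_prob (Suc t) \<le> unabsorbed_prob t"
proof -
  have step: "measure_pmf.expectation (K (hd p)) (\<lambda>s. indicator unabsorbed (s # p))
              \<le> (indicator unabsorbed p :: real)" if "p \<in> paths \<Omega> t" for p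
  proof -
    have "measure_pmf.expectation (K (hd p)) (\<lambda>s. indicator unabsorbed (s # p) :: real)
          \<le> measure_pmf.expectation (K (hd p)) (\<lambda>s. indicator unabsorbed p)"
      using finite_step_support[OF hd_paths[OF that]]
      by (intro integral_mono integrable_measure_pmf_finite)
         (auto simp: unabsorbed_def indicator_def)
    then show ?thesis by simp
  qed
  have "unabsorbed_prob (Suc t) \<le> (\<Sum>p\<in>paths \<Omega> t. pmf (path t) p * indicator unabsorbed p)"
    unfolding expectation_path_Suc using step by (intro sum_mono mult_left_mono) auto
  also have "\<dots> = unabsorbed_prob t" by (rule expectation_path[symmetric])
  finally show ?thesis .
qed

lemma unabsorbed_prob_antimono: "i \<le> t \<Longrightarrow> unabsorbed_prob t \<le> unabsorbed_prob i"
  by (induction t rule: dec_induct) (use unabsorbed_prob_Suc order_trans in blast)+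

lemma mean_potential_lower:
  "f s0 + \<delta> * (\<Sum>i<t. unabsorbed_prob i) \<le> mean_potential t"
proof (induction t)
  case 0
  show ?case by simp
next
  case (Suc t)
  have step: "f (hd p) + \<delta> * indicator unabsorbed p
              \<le> measure_pmf.expectation (K (hd p)) (\<lambda>s. f (hd (s # p)))"
    if "p \<in> paths \<Omega> t" for p
  proof -
    have "p \<noteq> []" using that by (auto simp: paths_def)
    then have "f (hd p) + \<delta> * indicator unabsorbed p \<le> f (hd p) + (if hd p \<in> A then 0 else \<delta>)"
      using delta_pos hd_in_set by (fastforce simp: unabsorbed_def indicator_def)
    also have "\<dots> \<le> measure_pmf.expectation (K (hd p)) f"
      by (rule drift[OF hd_paths[OF that]])
    finally show ?thesis by simp
  qed
  have "f s0 + \<delta> * (\<Sum>i<Suc t. unabsorbed_prob i)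
        \<le> mean_potential t + \<delta> * unabsorbed_prob t"
    using Suc by (simp add: distrib_left)
  also have "\<dots> = (\<Sum>p\<in>paths \<Omega> t. pmf (path t) p * (f (hd p) + \<delta> * indicator unabsorbed p))"
    unfolding expectation_path by (simp add: sum.distrib sum_distrib_left algebra_simps)
  also have "\<dots> \<le> mean_potential (Suc t)"
    unfolding expectation_path_Suc using step by (intro sum_mono mult_left_mono) auto
  finally show ?case .
qed

lemma mean_potential_upper:
  assumes "\<And>s. s \<in> \<Omega> \<Longrightarrow> f s \<le> M"
  shows "mean_potential t \<le> M"
proof -
  have "mean_potential t \<le> (\<Sum>p\<in>paths \<Omega> t. pmf (path t) p * M)"
    unfolding expectation_path using assms hd_paths by (intro sum_mono mult_left_mono) auto
  also have "\<dots> = M"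
    using sum_pmf_eq_1[OF finite_paths[OF finite_space] path_support]
    by (simp add: sum_distrib_right[symmetric])
  finally show ?thesis .
qed

text \<open>Additive drift theorem: with f bounded by M, the non-absorption probability at
  time t is at most (M - f s0) / (\<delta> t), since it bounds each of the first t terms.\<close>
theorem additive_drift_bound:
  assumes "\<And>s. s \<in> \<Omega> \<Longrightarrow> f s \<le> M"
  shows "real t * measure_pmf.prob (path t) unabsorbed \<le> (M - f s0) / \<delta>"
proof -
  have "real t * unabsorbed_prob t = (\<Sum>i<t. unabsorbed_prob t)" by simp
  also have "\<dots> \<le> (\<Sum>i<t. unabsorbed_prob i)"
    using unabsorbed_prob_antimono by (intro sum_mono) auto
  also have "\<dots> \<le> (M - f s0) / \<delta>"
    using mean_potential_lower[of t] mean_potential_upper[OF assms, of t] delta_pos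
    by (simp add: field_simps)
  finally show ?thesis by simp
qed

corollary absorption_within:
  assumes bounded: "\<And>s. s \<in> \<Omega> \<Longrightarrow> f s \<le> M"
    and "t > 0" and "(M - f s0) / \<delta> \<le> real t * \<epsilon>"
  shows "measure_pmf.prob (path t) {p. set p \<inter> A \<noteq> {}} \<ge> 1 - \<epsilon>"
proof -
  have "real t * measure_pmf.prob (path t) unabsorbed \<le> (M - f s0) / \<delta>"
    using bounded by (rule additive_drift_bound)
  then have "real t * measure_pmf.prob (path t) unabsorbed \<le> real t * \<epsilon>"
    using assms(3) by linarith
  then have "measure_pmf.prob (path t) unabsorbed \<le> \<epsilon>"
    using assms(2) by simp
  moreover have "unabsorbed = UNIV - {p. set p \<inter> A \<noteq> {}}"
    unfolding unabsorbed_def by auto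
  ultimately show ?thesis
    using measure_pmf.prob_compl[of "{p. set p \<inter> A \<noteq> {}}" "path t"] by simp
qed

end

locale moran_graph =
  fixes V :: "'a set" and E :: "'a \<Rightarrow> 'a \<Rightarrow> bool" and r :: real
  assumes finite_V: "finite V" and card_V: "card V \<ge> 2"
    and edges_sym: "\<And>u v. E u v \<Longrightarrow> E v u"
    and connected: "graph_connected E V"
    and fitness_gt_1: "r > 1"
begin

abbreviation deg :: "'a \<Rightarrow> nat" where "deg \<equiv> graph_deg E V"
abbreviation nbrs :: "'a \<Rightarrow> 'a set" where "nbrs x \<equiv> {y \<in> V. E x y}"
abbreviation \<phi> :: "'a set \<Rightarrow> real" where "\<phi> \<equiv> phi_set E V"
abbreviation W :: "'a set \<Rightarrow> real" where "W \<equiv> total_fitness V r"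

lemma edge_leaving:
  assumes "S \<subseteq> V" "u \<in> S" "v \<in> V - S"
  shows "\<exists>a b. a \<in> S \<and> b \<in> V - S \<and> E a b"
proof -
  have "(\<lambda>a b. a \<in> V \<and> b \<in> V \<and> E a b)\<^sup>*\<^sup>* u v"
    using connected assms unfolding graph_connected_def by blast
  then have "v \<notin> S \<longrightarrow> (\<exists>a b. a \<in> S \<and> b \<in> V - S \<and> E a b)"
    by (induction rule: rtranclp_induct) (use assms in blast)+
  then show ?thesis using assms by blast
qed

lemma nbrs_nonempty: assumes "a \<in> V" shows "nbrs a \<noteq> {}"
proof -
  have "\<not> V \<subseteq> {a}"
    using card_V card_mono[of "{a}" V] by auto
  then obtain v where "v \<in> V - {a}" by blast
  then obtain b where "b \<in> V" "E a b"
    using edge_leaving[of "{a}" a v] assms by blast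
  then show ?thesis by blast
qed

text \<open>Degrees lie between 1 and n, so the potential and the edge weights are well defined.\<close>
lemma deg_pos: "a \<in> V \<Longrightarrow> deg a > 0"
  unfolding graph_deg_def using nbrs_nonempty finite_V by (simp add: card_gt_0_iff)

lemma deg_le_card: "deg a \<le> card V"
  unfolding graph_deg_def using finite_V by (intro card_mono) auto

lemma phi_mono: "X \<subseteq> V \<Longrightarrow> \<phi> X \<le> \<phi> V"
  unfolding phi_set_def using finite_V by (intro sum_mono2) auto

lemma phi_insert: "S \<subseteq> V \<Longrightarrow> y \<in> V - S \<Longrightarrow> \<phi> (insert y S) = \<phi> S + 1 / deg y"
  unfolding phi_set_def using finite_subset[OF _ finite_V] by simp

lemma phi_remove: "S \<subseteq> V \<Longrightarrow> y \<in> S \<Longrightarrow> \<phi> (S - {y}) = \<phi> S - 1 / deg y"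
  unfolding phi_set_def using finite_subset[OF _ finite_V] by (simp add: sum_diff1)

lemma total_fitness_bounds:
  assumes "S \<subseteq> V"
  shows "W S \<ge> card V" and "W S \<le> r * card V"
proof -
  have "card S + card (V - S) = card V"
    using assms finite_V by (metis card_Diff_subset card_mono finite_subset le_add_diff_inverse)
  then have "real (card S) + real (card (V - S)) = real (card V)"
    by (metis of_nat_add)
  then have "W S = card V + (r - 1) * card S" "W S = r * card V - (r - 1) * card (V - S)"
    unfolding total_fitness_def by (simp_all add: algebra_simps flip: distrib_left)
  moreover have "(r - 1) * card S \<ge> 0" "(r - 1) * card (V - S) \<ge> 0"
    using fitness_gt_1 by simp_all
  ultimately show "W S \<ge> card V" "W S \<le> r * card V"
    by linarith+
qed

lemma total_fitness_pos: "S \<subseteq> V \<Longrightarrow> W S > 0"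
  using total_fitness_bounds(1)[of S] card_V by linarith

definition birth_weight :: "'a set \<Rightarrow> 'a \<Rightarrow> real" where
  "birth_weight S x = (if x \<in> V then (if x \<in> S then r else 1) / W S else 0)"

lemma birth_weight_nonneg: "S \<subseteq> V \<Longrightarrow> birth_weight S x \<ge> 0"
  using total_fitness_pos[of S] fitness_gt_1 unfolding birth_weight_def by auto

lemma birth_weight_sum: assumes "S \<subseteq> V" shows "(\<Sum>x\<in>V. birth_weight S x) = 1"
proof -
  have "(\<Sum>x\<in>V. (if x \<in> S then r else 1)) = W S"
    using finite_V assms unfolding total_fitness_def
    by (simp add: sum.If_cases Int_absorb1 Diff_eq)
  then show ?thesis
    using total_fitness_pos[OF assms] unfolding birth_weight_def
    by (simp add: sum_divide_distrib[symmetric])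
qed

lemma pmf_birth: assumes "S \<subseteq> V"
  shows "pmf (embed_pmf (birth_weight S)) x = birth_weight S x"
proof (rule pmf_embed_pmf)
  have "(\<integral>\<^sup>+x. ennreal (birth_weight S x) \<partial>count_space UNIV) = (\<Sum>x\<in>V. ennreal (birth_weight S x))"
    by (rule nn_integral_count_space') (auto simp: finite_V birth_weight_def)
  also have "\<dots> = 1"
    using birth_weight_nonneg[OF assms] birth_weight_sum[OF assms] by (simp add: sum_ennreal)
  finally show "(\<integral>\<^sup>+x. ennreal (birth_weight S x) \<partial>count_space UNIV) = 1" .
qed (use birth_weight_nonneg[OF assms] in auto)

lemma set_pmf_birth: "S \<subseteq> V \<Longrightarrow> set_pmf (embed_pmf (birth_weight S)) \<subseteq> V"
  by (auto simp: set_pmf_eq pmf_birth birth_weight_def)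

definition offspring :: "'a set \<Rightarrow> 'a \<Rightarrow> 'a set pmf" where
  "offspring S a = map_pmf (\<lambda>y. if a \<in> S then insert y S else S - {y}) (pmf_of_set (nbrs a))"

lemma moran_step_eq:
  "moran_step E V r S = bind_pmf (embed_pmf (birth_weight S)) (offspring S)"
  unfolding moran_step_def birth_weight_def offspring_def[abs_def] ..

lemma set_pmf_offspring: "a \<in> V \<Longrightarrow> S \<subseteq> V \<Longrightarrow> set_pmf (offspring S a) \<subseteq> Pow V"
  using nbrs_nonempty finite_V by (auto simp: offspring_def)

lemma set_pmf_moran_step: "S \<subseteq> V \<Longrightarrow> set_pmf (moran_step E V r S) \<subseteq> Pow V"
  using set_pmf_birth set_pmf_offspring unfolding moran_step_eq set_bind_pmf by blast

definition edge_weight :: "'a \<Rightarrow> 'a \<Rightarrow> real" where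
  "edge_weight a b = (if E a b then 1 / (real (deg a) * real (deg b)) else 0)"

definition cut_weight :: "'a set \<Rightarrow> real" where
  "cut_weight S = (\<Sum>a\<in>S. \<Sum>b\<in>V - S. edge_weight a b)"

lemma edge_weight_nonneg: "edge_weight a b \<ge> 0"
  unfolding edge_weight_def by simp

lemma cut_weight_nonneg: "cut_weight S \<ge> 0"
  unfolding cut_weight_def by (intro sum_nonneg edge_weight_nonneg)

lemma edge_weight_sym: "edge_weight a b = edge_weight b a"
  unfolding edge_weight_def using edges_sym by (auto simp: mult.commute)

lemma cut_weight_entering: "(\<Sum>a\<in>V - S. \<Sum>b\<in>S. edge_weight a b) = cut_weight S"
  unfolding cut_weight_def by (rule sum.swap[THEN trans]) (intro sum.cong refl edge_weight_sym)

lemma sum_nbrs_edge_weight: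
  assumes "a \<in> V" "T \<subseteq> V"
  shows "(\<Sum>y\<in>nbrs a \<inter> T. 1 / real (deg y)) / real (deg a) = (\<Sum>y\<in>T. edge_weight a y)"
proof -
  have "(\<Sum>y\<in>T. edge_weight a y) = (\<Sum>y\<in>{y\<in>T. E a y}. 1 / (real (deg a) * real (deg y)))"
    unfolding edge_weight_def using finite_subset[OF assms(2) finite_V]
    by (simp add: sum.inter_filter)
  also have "{y\<in>T. E a y} = nbrs a \<inter> T" using assms(2) by auto
  finally show ?thesis by (simp add: sum_divide_distrib mult.commute)
qed

lemma expectation_offspring:
  assumes "S \<subseteq> V" "a \<in> V"
  shows "measure_pmf.expectation (offspring S a) \<phi> =
           \<phi> S + (if a \<in> S then (\<Sum>b\<in>V - S. edge_weight a b) else - (\<Sum>b\<in>S. edge_weight a b))"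
proof -
  let ?new = "\<lambda>y. if a \<in> S then insert y S else S - {y}"
  let ?gain = "\<lambda>y. if a \<in> S then (if y \<in> V - S then 1 / real (deg y) else 0)
                   else - (if y \<in> S then 1 / real (deg y) else 0)"
  have fin: "finite (nbrs a)" using finite_V by simp
  have d: "real (deg a) > 0" using deg_pos[OF assms(2)] by simp
  have new: "\<phi> (?new y) = \<phi> S + ?gain y" if "y \<in> V" for y
    using assms that
    by (cases "a \<in> S"; cases "y \<in> S") (simp_all add: phi_insert phi_remove insert_absorb)
  have gain: "(\<Sum>y\<in>nbrs a. ?gain y) = (if a \<in> S then (\<Sum>y\<in>nbrs a \<inter> (V - S). 1 / real (deg y))
                                        else - (\<Sum>y\<in>nbrs a \<inter> S. 1 / real (deg y)))"
    using fin by (cases "a \<in> S") (simp_all add: sum.inter_restrict sum_negf)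
  have "(\<Sum>y\<in>nbrs a. \<phi> (?new y)) = (\<Sum>y\<in>nbrs a. \<phi> S + ?gain y)"
    by (intro sum.cong refl new) simp
  also have "\<dots> = deg a * \<phi> S + (\<Sum>y\<in>nbrs a. ?gain y)"
    by (simp only: sum.distrib sum_constant graph_deg_def)
  finally have sum_new: "(\<Sum>y\<in>nbrs a. \<phi> (?new y)) = deg a * \<phi> S + (\<Sum>y\<in>nbrs a. ?gain y)" .
  have "measure_pmf.expectation (offspring S a) \<phi> = (\<Sum>y\<in>nbrs a. \<phi> (?new y)) / deg a"
    using fin nbrs_nonempty[OF assms(2)]
    by (simp add: offspring_def integral_pmf_of_set graph_deg_def)
  also have "\<dots> = \<phi> S + (\<Sum>y\<in>nbrs a. ?gain y) / deg a"
    unfolding sum_new using d by (simp add: add_divide_distrib)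
  finally show ?thesis
    using assms gain sum_nbrs_edge_weight[of a "V - S"] sum_nbrs_edge_weight[of a S]
    by (cases "a \<in> S") simp_all
qed

lemma expectation_moran_step:
  assumes "S \<subseteq> V"
  shows "measure_pmf.expectation (moran_step E V r S) \<phi> = \<phi> S + (r - 1) * cut_weight S / W S"
proof -
  let ?out = "\<lambda>a. \<Sum>b\<in>V - S. edge_weight a b" and ?in = "\<lambda>a. \<Sum>b\<in>S. edge_weight a b"
  let ?inc = "\<lambda>a. if a \<in> S then ?out a else - ?in a"
  have fin_offspring: "finite (set_pmf (offspring S a))" if "a \<in> V" for a
    using set_pmf_offspring[OF that assms] finite_V by (meson finite_Pow_iff finite_subset)
  have "measure_pmf.expectation (moran_step E V r S) \<phi> = (\<Sum>a\<in>V. birth_weight S a * (\<phi> S + ?inc a))"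
    unfolding moran_step_eq using finite_V fin_offspring set_pmf_birth[OF assms]
    by (subst pmf_expectation_bind[of V]) (auto simp: pmf_birth assms expectation_offspring)
  also have "\<dots> = \<phi> S * (\<Sum>a\<in>V. birth_weight S a) + (\<Sum>a\<in>V. birth_weight S a * ?inc a)"
    by (simp add: distrib_left sum.distrib sum_distrib_left mult.commute)
  also have "(\<Sum>a\<in>V. birth_weight S a * ?inc a)
           = (\<Sum>a\<in>V - S. birth_weight S a * ?inc a) + (\<Sum>a\<in>S. birth_weight S a * ?inc a)"
    by (rule sum.subset_diff[OF assms finite_V])
  also have "(\<Sum>a\<in>V - S. birth_weight S a * ?inc a) = - (\<Sum>a\<in>V - S. ?in a) / W S"
    by (simp add: birth_weight_def sum_negf sum_divide_distrib)
  also have "(\<Sum>a\<in>S. birth_weight S a * ?inc a) = r * (\<Sum>a\<in>S. ?out a) / W S"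
    using assms by (auto simp: birth_weight_def sum_distrib_left sum_divide_distrib intro!: sum.cong)
  finally show ?thesis
    using birth_weight_sum[OF assms] cut_weight_entering[of S]
    by (simp add: cut_weight_def diff_divide_distrib algebra_simps)
qed

text \<open>A proper nonempty mutant set has an edge leaving it, of weight at least 1/n^2.\<close>
lemma cut_weight_lower:
  assumes "S \<subseteq> V" "S \<noteq> {}" "S \<noteq> V"
  shows "cut_weight S \<ge> 1 / (real (card V) * real (card V))"
proof -
  obtain a b where ab: "a \<in> S" "b \<in> V - S" "E a b"
    using edge_leaving[of S] assms by blast
  have "1 / (real (card V) * real (card V)) \<le> 1 / (real (deg a) * real (deg b))"
    using ab assms deg_pos[of a] deg_pos[of b] deg_le_card[of a] deg_le_card[of b]
    by (intro divide_left_mono mult_mono mult_pos_pos) auto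
  also have "\<dots> = edge_weight a b" using ab by (simp add: edge_weight_def)
  also have "\<dots> \<le> (\<Sum>b\<in>V - S. edge_weight a b)"
    using ab finite_V by (intro member_le_sum edge_weight_nonneg) auto
  also have "\<dots> \<le> cut_weight S"
    unfolding cut_weight_def using ab finite_subset[OF assms(1) finite_V]
    by (intro member_le_sum sum_nonneg edge_weight_nonneg) auto
  finally show ?thesis .
qed

text \<open>The guaranteed drift \<delta> = (r - 1) / (r n^3): cut weight at least 1/n^2 over
  total fitness at most r n.\<close>
definition drift_rate :: real where
  "drift_rate = (r - 1) / (r * real (card V) ^ 3)"

lemma drift_rate_pos: "drift_rate > 0"
  unfolding drift_rate_def using fitness_gt_1 card_V by (auto intro!: divide_pos_pos)

lemma potential_drift:
  assumes "S \<subseteq> V"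
  shows "\<phi> S + (if S \<in> {{}, V} then 0 else drift_rate) \<le> measure_pmf.expectation (moran_step E V r S) \<phi>"
proof -
  have W: "0 < W S" "W S \<le> r * card V"
    using total_fitness_pos[OF assms] total_fitness_bounds(2)[OF assms] by auto
  have "(if S \<in> {{}, V} then 0 else drift_rate) \<le> (r - 1) * cut_weight S / W S"
  proof (cases "S \<in> {{}, V}")
    case True
    then show ?thesis using fitness_gt_1 cut_weight_nonneg[of S] W by simp
  next
    case False
    have "drift_rate = (r - 1) * (1 / (real (card V) * real (card V))) / (r * real (card V))"
      unfolding drift_rate_def by (simp add: power3_eq_cube mult.assoc)
    also have "\<dots> \<le> (r - 1) * cut_weight S / W S"
      using cut_weight_lower[OF assms] False fitness_gt_1 W cut_weight_nonneg[of S]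
      by (intro frac_le mult_left_mono mult_nonneg_nonneg) auto
    finally show ?thesis using False by simp
  qed
  then show ?thesis using expectation_moran_step[OF assms] by simp
qed

lemma moran_additive_drift:
  assumes "S0 \<subseteq> V"
  shows "additive_drift (moran_step E V r) (Pow V) {{}, V} \<phi> drift_rate S0"
proof
  show "finite (Pow V)" using finite_V by simp
  show "\<phi> S + (if S \<in> {{}, V} then 0 else drift_rate)
          \<le> measure_pmf.expectation (moran_step E V r S) \<phi>" if "S \<in> Pow V" for S
    using that potential_drift by blast
qed (use assms set_pmf_moran_step drift_rate_pos in auto)

lemma phi_singleton_pos: "x \<in> V \<Longrightarrow> \<phi> {x} > 0"
  using deg_pos by (simp add: phi_set_def)

end

lemma moran_path_eq_chain_path: "moran_path E V r S0 t = chain_path (moran_step E V r) S0 t"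
  by (induction t) simp_all

text \<open>Main result: since \<phi>(G) / \<delta> = r / (r - 1) n^3 \<phi>(G), the assumed bound on t is exactly
  the time after which the drift theorem guarantees absorption with probability 1 - \<epsilon>.\<close>
theorem corollary8:
  fixes V :: "'a set" and E :: "'a \<Rightarrow> 'a \<Rightarrow> bool"
    and r \<epsilon> :: real and t :: nat and x :: 'a
  assumes "finite V" and "card V \<ge> 2"
    and "\<And>u v. E u v \<Longrightarrow> u \<in> V \<and> v \<in> V"
    and "\<And>u v. E u v \<Longrightarrow> E v u"
    and "\<And>u. \<not> E u u"
    and "graph_connected E V"
    and "r > 1"
    and "0 < \<epsilon>" and "\<epsilon> < 1"
    and "real t \<ge> r / (r - 1) * real (card V) ^ 3 * phi_set E V V / \<epsilon>"
    and "x \<in> V"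
  shows "measure_pmf.prob (moran_path E V r {x} t) {p. \<exists>X\<in>set p. X = {} \<or> X = V} \<ge> 1 - \<epsilon>"
proof -
  interpret moran_graph V E r
    using assms by unfold_locales auto
  interpret additive_drift "moran_step E V r" "Pow V" "{{}, V}" \<phi> drift_rate "{x}"
    using moran_additive_drift assms(11) by simp
  have "0 < \<phi> {x}" using phi_singleton_pos assms(11) by simp
  then have "(\<phi> V - \<phi> {x}) / drift_rate \<le> \<phi> V / drift_rate"
    using drift_rate_pos by (simp add: divide_right_mono)
  also have "\<dots> = r / (r - 1) * real (card V) ^ 3 * \<phi> V / \<epsilon> * \<epsilon>"
    using assms(8) fitness_gt_1 card_V by (simp add: drift_rate_def field_simps)
  also have "\<dots> \<le> real t * \<epsilon>"
    using assms(8,10) by (intro mult_right_mono) auto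
  finally have time_enough: "(\<phi> V - \<phi> {x}) / drift_rate \<le> real t * \<epsilon>" .
  have "0 < \<phi> V" using \<open>0 < \<phi> {x}\<close> phi_mono[of "{x}"] assms(11) by simp
  then have "0 < r / (r - 1) * real (card V) ^ 3 * \<phi> V / \<epsilon>"
    using assms(7,8) card_V by (intro divide_pos_pos mult_pos_pos) auto
  then have "t > 0" using assms(10) by linarith
  then have "measure_pmf.prob (chain_path (moran_step E V r) {x} t) {p. set p \<inter> {{}, V} \<noteq> {}} \<ge> 1 - \<epsilon>"
    using phi_mono time_enough by (intro absorption_within) auto
  moreover have "{p. set p \<inter> {{}, V} \<noteq> {}} = {p. \<exists>X\<in>set p. X = {} \<or> X = V}" by auto
  ultimately show ?thesis by (simp add: moran_path_eq_chain_path)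
qed

end
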